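(* Let $\mathcal{X}$ be a discrete set and let $\mathcal{A}$ be an $\varepsilon$-differentially private randomized algorithm that on input a dataset in $\mathcal{X}^n$ outputs a function from $\mathcal{X}$ to $[0,1]$. Let $\mathcal{P}$ be a distribution over $\mathcal{X}$, let $\mathbf{S}$ be distributed according to $\mathcal{P}^n$ and let $\boldsymbol{\phi}=\mathcal{A}(\mathbf{S})$. Then for any $\tau>0$, if $\varepsilon\le\sqrt{\tau^2-\ln(2)/(2n)}$, then $$\Pr\left[\,\left|\mathcal{P}[\boldsymbol{\phi}]-\mathcal{E}_{\mathbf{S}}[\boldsymbol{\phi}]\right|>\tau\,\right]\le 3\sqrt{2}\,e^{-\tau^2 n}.$$
   Context: For $\psi:\mathcal{X}\to[0,1]$, $\mathcal{P}[\psi]=\mathbb{E}_{x\sim\mathcal{P}}[\psi(x)]$ and for $S=(x_1,\dots,x_n)$, $\mathcal{E}_S[\psi]=\frac1n\sum_{i=1}^n\psi(x_i)$. Two datasets in $\mathcal{X}^n$ are adjacent if they differ in a single element. A randomized algorithm $\mathcal{A}$ with domain $\mathcal{X}^n$ is $\varepsilon$-differentially private if for every set $\mathcal{S}$ of outputs and every pair of adjacent datasets $x,y$, $\Pr[\mathcal{A}(x)\in\mathcal{S}]\le e^{\varepsilon}\Pr[\mathcal{A}(y)\in\mathcal{S}]$. The probability is over $\mathbf{S}$ and the randomness of $\mathcal{A}$. *)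

theory Defs
  imports "HOL-Probability.Probability"
begin

definition pop_mean :: "'a pmf \<Rightarrow> ('a \<Rightarrow> real) \<Rightarrow> real" where
  "pop_mean P \<psi> = measure_pmf.expectation P \<psi>"

definition emp_mean :: "'a list \<Rightarrow> ('a \<Rightarrow> real) \<Rightarrow> real" where
  "emp_mean S \<psi> = (\<Sum>x\<leftarrow>S. \<psi> x) / real (length S)"

definition adjacent :: "'a list \<Rightarrow> 'a list \<Rightarrow> bool" where
  "adjacent x y \<longleftrightarrow> length x = length y \<and> card {i. i < length x \<and> x ! i \<noteq> y ! i} = 1"

definition out_space :: "('a \<Rightarrow> real) measure" where
  "out_space = PiM UNIV (\<lambda>_. borel)"

definition is_algorithm :: "nat \<Rightarrow> ('a list \<Rightarrow> ('a \<Rightarrow> real) measure) \<Rightarrow> bool" where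
  "is_algorithm n A \<longleftrightarrow> (\<forall>x. length x = n \<longrightarrow> prob_space (A x) \<and> sets (A x) = sets out_space)"

definition differentially_private ::
  "real \<Rightarrow> nat \<Rightarrow> ('a list \<Rightarrow> ('a \<Rightarrow> real) measure) \<Rightarrow> bool" where
  "differentially_private \<epsilon> n A \<longleftrightarrow>
     (\<forall>x y T. length x = n \<and> length y = n \<and> adjacent x y \<and> T \<in> sets out_space \<longrightarrow>
        measure (A x) T \<le> exp \<epsilon> * measure (A y) T)"

end

theory Submission
  imports Defs
begin

text \<open>
  Fix all sample points but one, \<open>y\<close>. By \<open>\<epsilon>\<close>-differential privacy the output laws
  \<open>A (\<dots> y \<dots>)\<close> have densities with respect to a common reference law that lie within a
  factor \<open>e\<^sup>\<epsilon>\<close> of each other. A density with values in \<open>[a, e\<^sup>\<epsilon> a]\<close> has covariance at most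
  \<open>\<epsilon>/4\<close> times its mean with any \<open>[0, 1]\<close>-valued function, so tilting \<open>P\<close> by it moves the
  mean of \<open>\<phi>\<close> by at most \<open>\<epsilon>/4\<close>; Hoeffding's lemma under the tilted law then bounds the
  moment generating function of \<open>\<phi> y - P[\<phi>]\<close>, for every output \<open>\<phi>\<close>, by
  \<open>exp (l\<^sup>2/8 + |l| \<epsilon>/4)\<close>. Peeling off the sample points one at a time bounds the joint
  moment generating function of \<open>n (E\<^sub>S[\<phi>] - P[\<phi>])\<close> by the \<open>n\<close>-th power of this, and the
  Chernoff bound at \<open>l = 4\<tau> - \<epsilon>\<close> gives \<open>2 exp (-n (4\<tau> - \<epsilon>)\<^sup>2/8) \<le> 2 exp (-n \<tau>\<^sup>2)\<close>.
\<close>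

lemma exp_mult_two_minus_le:
  fixes x :: real
  assumes "0 \<le> x"
  shows "exp x * (2 - x) \<le> 2 + x"
proof -
  let ?f = "\<lambda>t::real. 2 + t - exp t * (2 - t)"
  have "?f 0 \<le> ?f x"
  proof (rule DERIV_nonneg_imp_increasing_open[OF assms])
    fix t :: real
    have "exp t * (1 - t) \<le> exp t * exp (-t)"
      using exp_ge_add_one_self[of "-t"] by (intro mult_left_mono) auto
    then have "0 \<le> 1 - exp t * (1 - t)"
      by (simp add: exp_minus)
    moreover have "DERIV ?f t :> 1 - exp t * (1 - t)"
      by (auto intro!: derivative_eq_intros simp: algebra_simps)
    ultimately show "\<exists>y. DERIV ?f t :> y \<and> 0 \<le> y"
      by blast
  qed (intro continuous_intros)
  then show ?thesis
    by simp
qed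

lemma exp_minus_one_div_exp_plus_one_le:
  fixes x :: real
  assumes "0 \<le> x"
  shows "(exp x - 1) / (exp x + 1) \<le> x / 2"
proof -
  have "2 * (exp x - 1) \<le> x * (exp x + 1)"
    using exp_mult_two_minus_le[OF assms] by (simp add: algebra_simps)
  moreover have "0 < exp x + 1"
    by (simp add: add_pos_pos)
  ultimately show ?thesis
    by (simp add: divide_simps)
qed

lemma sqrt_diff_div_sqrt_add_le:
  fixes a b e :: real
  assumes "0 < a" "a \<le> b" "b \<le> exp e * a"
  shows "(sqrt b - sqrt a) / (sqrt b + sqrt a) \<le> e / 4"
proof -
  have "a * 1 \<le> a * exp e"
    using order.trans[OF assms(2,3)] by (metis mult.commute mult_1_right)
  then have "0 \<le> e"
    using mult_left_le_imp_le[of a 1 "exp e"] assms(1) by simp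
  have "sqrt (exp e) = exp (e / 2)"
    by (rule real_sqrt_unique) (simp_all add: power2_eq_square exp_add[symmetric])
  then have sqrt_b: "sqrt b \<le> exp (e / 2) * sqrt a"
    using assms(3) by (metis real_sqrt_le_mono real_sqrt_mult)
  have mono: "(x - s) / (x + s) \<le> (y - s) / (y + s)" if "0 < s" "0 \<le> x" "x \<le> y" for x y s :: real
  proof -
    have "(x - s) * (y + s) \<le> (y - s) * (x + s)"
      using mult_left_mono[OF \<open>x \<le> y\<close>, of "2 * s"] that by (simp add: algebra_simps)
    then show ?thesis
      using that by (simp add: divide_simps)
  qed
  have "0 < sqrt a"
    using assms by simp
  then have "(sqrt b - sqrt a) / (sqrt b + sqrt a)
      \<le> (exp (e / 2) * sqrt a - sqrt a) / (exp (e / 2) * sqrt a + sqrt a)"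
    using sqrt_b assms by (intro mono) auto
  also have "\<dots> = (sqrt a * (exp (e / 2) - 1)) / (sqrt a * (exp (e / 2) + 1))"
    by (simp add: algebra_simps)
  also have "\<dots> = (exp (e / 2) - 1) / (exp (e / 2) + 1)"
    using \<open>0 < sqrt a\<close> by simp
  also have "\<dots> \<le> e / 4"
    using exp_minus_one_div_exp_plus_one_le[of "e / 2"] \<open>0 \<le> e\<close> by simp
  finally show ?thesis .
qed

lemma mult_gaps_le_of_ratio_bounded:
  fixes a b m e :: real
  assumes "0 < a" "a \<le> m" "m \<le> b" "b \<le> exp e * a"
  shows "(b - m) * (m - a) \<le> e / 4 * m * (b - a)"
proof -
  have gap: "m * (v - u)\<^sup>2 - (v * v - m) * (m - u * u) = (m - u * v)\<^sup>2" for u v :: real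
    by (simp add: power2_eq_square algebra_simps)
  have sq: "(v - u)\<^sup>2 = (v - u) / (v + u) * (v * v - u * u)" if "0 < v + u" for u v :: real
    using that by (simp add: power2_eq_square field_simps)
  have sqrt_sq: "sqrt a * sqrt a = a" "sqrt b * sqrt b = b" and "0 < sqrt b + sqrt a"
    using assms by (auto intro: add_pos_nonneg)
  have "(b - m) * (m - a) \<le> m * (sqrt b - sqrt a)\<^sup>2"
    using gap[of "sqrt b" "sqrt a"] unfolding sqrt_sq by (metis diff_ge_0_iff_ge zero_le_power2)
  also have "\<dots> = m * ((sqrt b - sqrt a) / (sqrt b + sqrt a) * (b - a))"
    using sq[OF \<open>0 < sqrt b + sqrt a\<close>] unfolding sqrt_sq by simp
  also have "\<dots> \<le> m * (e / 4 * (b - a))"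
    using sqrt_diff_div_sqrt_add_le[of a b e] assms
    by (intro mult_left_mono mult_right_mono) auto
  finally show ?thesis
    by (simp add: algebra_simps)
qed

section \<open>Covariance with a ratio-bounded density and tilted Hoeffding bounds\<close>

lemma (in prob_space) abs_expectation_mult_le_expectation_pos_part:
  fixes g f :: "'a \<Rightarrow> real"
  assumes [measurable]: "f \<in> borel_measurable M"
    and g: "integrable M g" "expectation g = 0"
    and f: "AE x in M. f x \<in> {0..1}"
  shows "\<bar>expectation (\<lambda>x. g x * f x)\<bar> \<le> expectation (\<lambda>x. max (g x) 0)"
proof -
  have [measurable]: "g \<in> borel_measurable M"
    using g(1) by (rule borel_measurable_integrable)
  have int_gf: "integrable M (\<lambda>x. g x * f x)"
    by (rule Bochner_Integration.integrable_bound[OF g(1)])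
       (use f in \<open>auto simp: abs_mult intro!: mult_left_le\<close>)
  have int_pos: "integrable M (\<lambda>x. max (g x) 0)"
    using g(1) by auto
  have "expectation (\<lambda>x. g x * f x) \<le> expectation (\<lambda>x. max (g x) 0)"
  proof (intro integral_mono_AE int_gf int_pos)
    show "AE x in M. g x * f x \<le> max (g x) 0"
      using f
    proof eventually_elim
      case (elim x)
      show ?case
        using elim mult_left_le[of "f x" "g x"] mult_nonpos_nonneg[of "g x" "f x"] by (auto simp: max_def)
    qed
  qed
  moreover have "expectation (\<lambda>x. g x - max (g x) 0) \<le> expectation (\<lambda>x. g x * f x)"
  proof (intro integral_mono_AE int_gf)
    show "AE x in M. g x - max (g x) 0 \<le> g x * f x"
      using f
    proof eventually_elim
      case (elim x)
      show ?case
        using elim mult_left_mono_neg[of "f x" 1 "g x"] mult_nonneg_nonneg[of "g x" "f x"] by (auto simp: max_def)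
    qed
  qed (use g(1) int_pos in auto)
  moreover have "expectation (\<lambda>x. g x - max (g x) 0) = - expectation (\<lambda>x. max (g x) 0)"
    using g int_pos by simp
  ultimately show ?thesis
    by linarith
qed

context interval_bounded_random_variable
begin

lemma expectation_in_interval: "a \<le> expectation f" "expectation f \<le> b"
  using AE_in_interval by (auto intro!: integral_ge_const integral_le_const elim!: eventually_mono)

lemma expectation_pos_part_deviation_le:
  "(b - a) * expectation (\<lambda>x. max (f x - expectation f) 0)
    \<le> (b - expectation f) * (expectation f - a)"
proof -
  define \<mu> where "\<mu> = expectation f"
  have "a \<le> \<mu>" "\<mu> \<le> b"
    unfolding \<mu>_def by (fact expectation_in_interval)+
  \<comment> \<open>On \<open>[a, b]\<close>, \<open>max (x - \<mu>) 0\<close> lies below the chord through \<open>(a, 0)\<close> and \<open>(b, b - \<mu>)\<close>.\<close>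
  have "expectation (\<lambda>x. (b - a) * max (f x - \<mu>) 0) \<le> expectation (\<lambda>x. (b - \<mu>) * (f x - a))"
  proof (intro integral_mono_AE)
    show "AE x in M. (b - a) * max (f x - \<mu>) 0 \<le> (b - \<mu>) * (f x - a)"
      using AE_in_interval
    proof eventually_elim
      case (elim x)
      have "(\<mu> - a) * (f x - b) \<le> 0"
        using elim \<open>a \<le> \<mu>\<close> by (intro mult_nonneg_nonpos) auto
      moreover have "0 \<le> (b - \<mu>) * (f x - a)"
        using elim \<open>\<mu> \<le> b\<close> by simp
      ultimately show ?case
        by (simp add: algebra_simps max_def)
    qed
  qed (use integrable in auto)
  moreover have "expectation (\<lambda>x. f x - a) = \<mu> - a"
    using integrable by (simp add: prob_space \<mu>_def)
  ultimately show ?thesis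
    by (simp add: \<mu>_def)
qed

lemma abs_expectation_covariance_le:
  fixes g :: "'a \<Rightarrow> real"
  assumes [measurable]: "g \<in> borel_measurable M" and g: "AE x in M. g x \<in> {0..1}"
  shows "(b - a) * \<bar>expectation (\<lambda>x. f x * (g x - expectation g))\<bar>
    \<le> (b - expectation f) * (expectation f - a)"
proof -
  interpret g: interval_bounded_random_variable M g 0 1
    by unfold_locales (use g in auto)
  define \<mu> where "\<mu> = expectation f"
  have "a \<le> b"
    using expectation_in_interval by linarith
  have "AE x in M. norm (f x * g x) \<le> norm (f x)"
    using g by eventually_elim (auto simp: abs_mult intro!: mult_left_le)
  then have int_fg: "integrable M (\<lambda>x. f x * g x)"
    by (intro Bochner_Integration.integrable_bound[OF integrable]) auto
  have "expectation (\<lambda>x. f x * (g x - expectation g)) = expectation (\<lambda>x. f x * g x) - \<mu> * expectation g"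
    using int_fg integrable by (simp add: right_diff_distrib \<mu>_def)
  also have "\<dots> = expectation (\<lambda>x. (f x - \<mu>) * g x)"
    using int_fg g.integrable by (simp add: left_diff_distrib)
  also have "\<bar>\<dots>\<bar> \<le> expectation (\<lambda>x. max (f x - \<mu>) 0)"
    using g by (intro abs_expectation_mult_le_expectation_pos_part) (auto simp: \<mu>_def expectation_shift)
  finally have "(b - a) * \<bar>expectation (\<lambda>x. f x * (g x - expectation g))\<bar>
      \<le> (b - a) * expectation (\<lambda>x. max (f x - \<mu>) 0)"
    using \<open>a \<le> b\<close> by (intro mult_left_mono) auto
  with expectation_pos_part_deviation_le show ?thesis
    unfolding \<mu>_def by linarith
qed

lemma Hoeffdings_lemma_nn_integral_any_sign:
  "(\<integral>\<^sup>+x. ennreal (exp (l * (f x - expectation f))) \<partial>M) \<le> ennreal (exp (l\<^sup>2 * (b - a)\<^sup>2 / 8))"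
proof (cases l "0 :: real" rule: linorder_cases)
  case less
  interpret neg: interval_bounded_random_variable M "\<lambda>x. - f x" "- b" "- a"
  proof
    show "AE x in M. - f x \<in> {- b..- a}"
      using AE_in_interval by eventually_elim auto
  qed simp
  show ?thesis
    using neg.Hoeffdings_lemma_nn_integral[of "- l"] less by (simp add: algebra_simps)
next
  case equal
  then show ?thesis
    by (simp add: emeasure_space_1)
next
  case greater
  then show ?thesis
    by (rule Hoeffdings_lemma_nn_integral)
qed

lemma Hoeffdings_lemma_nn_integral_exp_le:
  "(\<integral>\<^sup>+x. ennreal (exp (l * f x)) \<partial>M) \<le> ennreal (exp (l * expectation f + l\<^sup>2 * (b - a)\<^sup>2 / 8))"
proof -
  have "(\<integral>\<^sup>+x. ennreal (exp (l * f x)) \<partial>M)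
      = (\<integral>\<^sup>+x. ennreal (exp (l * expectation f)) * ennreal (exp (l * (f x - expectation f))) \<partial>M)"
    by (intro nn_integral_cong) (simp add: ennreal_mult[symmetric] exp_add[symmetric] algebra_simps)
  also have "\<dots> = ennreal (exp (l * expectation f)) * (\<integral>\<^sup>+x. ennreal (exp (l * (f x - expectation f))) \<partial>M)"
    by (rule nn_integral_cmult) simp
  also have "\<dots> \<le> ennreal (exp (l * expectation f)) * ennreal (exp (l\<^sup>2 * (b - a)\<^sup>2 / 8))"
    by (rule mult_left_mono[OF Hoeffdings_lemma_nn_integral_any_sign]) simp
  finally show ?thesis
    by (simp add: ennreal_mult[symmetric] exp_add)
qed

end

lemma measure_pmf_covariance_le_of_ratio_bounded:
  fixes P :: "'a pmf" and \<rho> f :: "'a \<Rightarrow> real"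
  assumes \<rho>: "\<And>y. 0 \<le> \<rho> y" "\<And>y y'. \<rho> y \<le> exp e * \<rho> y'" and "0 \<le> e"
    and f: "\<And>y. f y \<in> {0..1}"
  shows "\<bar>measure_pmf.expectation P (\<lambda>y. \<rho> y * (f y - measure_pmf.expectation P f))\<bar>
    \<le> e / 4 * measure_pmf.expectation P \<rho>"
proof -
  define a where "a = (INF y. \<rho> y)"
  define b where "b = (SUP y. \<rho> y)"
  have bdd: "bdd_below (range \<rho>)" "bdd_above (range \<rho>)"
    using \<rho> by (auto intro!: bdd_belowI[of _ 0] bdd_aboveI[of _ "exp e * \<rho> undefined"])
  have ab: "a \<le> \<rho> y" "\<rho> y \<le> b" for y
    unfolding a_def b_def using bdd by (auto intro: cINF_lower cSUP_upper)
  have "0 \<le> a"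
    unfolding a_def using \<rho>(1) by (auto intro: cINF_greatest)
  have "b \<le> exp e * \<rho> y" for y
    unfolding b_def using \<rho>(2) by (auto intro: cSUP_least)
  then have "b / exp e \<le> \<rho> y" for y
    by (simp add: divide_simps mult.commute)
  then have "b / exp e \<le> a"
    unfolding a_def by (auto intro: cINF_greatest)
  then have "b \<le> exp e * a"
    by (simp add: divide_simps mult.commute)
  interpret interval_bounded_random_variable "measure_pmf P" \<rho> a b
    by unfold_locales (use ab in auto)
  let ?X = "measure_pmf.expectation P (\<lambda>y. \<rho> y * (f y - measure_pmf.expectation P f))"
  let ?\<mu> = "measure_pmf.expectation P \<rho>"
  show ?thesis
  proof (cases "a < b")
    case True
    with \<open>b \<le> exp e * a\<close> \<open>0 \<le> a\<close> have "0 < a"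
      by (metis less_eq_real_def mult_zero_right not_le)
    have "(b - a) * \<bar>?X\<bar> \<le> (b - ?\<mu>) * (?\<mu> - a)"
      using f by (intro abs_expectation_covariance_le) auto
    also have "\<dots> \<le> e / 4 * ?\<mu> * (b - a)"
      using \<open>0 < a\<close> expectation_in_interval \<open>b \<le> exp e * a\<close> by (intro mult_gaps_le_of_ratio_bounded)
    finally show ?thesis
      using True by (simp add: mult.commute)
  next
    case False
    then have "\<rho> y = a" for y
      using ab[of y] by linarith
    then have "\<rho> = (\<lambda>_. a)"
      by auto
    interpret f: interval_bounded_random_variable "measure_pmf P" f 0 1
      by unfold_locales (use f in auto)
    show ?thesis
      using \<open>\<rho> = (\<lambda>_. a)\<close> \<open>0 \<le> a\<close> \<open>0 \<le> e\<close> f.expectation_shift by simp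
  qed
qed

lemma measure_pmf_tilted_mgf_le_of_density:
  fixes P :: "'a pmf" and \<rho> f :: "'a \<Rightarrow> real"
  assumes \<rho>: "\<And>y. 0 \<le> \<rho> y" "\<And>y y'. \<rho> y \<le> exp e * \<rho> y'" "measure_pmf.expectation P \<rho> = 1"
    and "0 \<le> e" and f: "\<And>y. f y \<in> {0..1}"
  shows "(\<integral>\<^sup>+y. ennreal (\<rho> y) * ennreal (exp (l * (f y - measure_pmf.expectation P f))) \<partial>P)
    \<le> ennreal (exp (l\<^sup>2 / 8 + \<bar>l\<bar> * e / 4))"
proof -
  define g where "g y = f y - measure_pmf.expectation P f" for y
  define Q where "Q = density (measure_pmf P) (\<lambda>y. ennreal (\<rho> y))"
  interpret \<rho>: interval_bounded_random_variable "measure_pmf P" \<rho> 0 "exp e * \<rho> undefined"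
    by unfold_locales (use \<rho> in auto)
  have "(\<integral>\<^sup>+y. ennreal (\<rho> y) \<partial>P) = 1"
    using \<rho> by (subst nn_integral_eq_integral) auto
  then interpret Q: prob_space Q
    by (intro prob_spaceI) (simp add: Q_def emeasure_density)
  interpret g: interval_bounded_random_variable Q g
      "- measure_pmf.expectation P f" "1 - measure_pmf.expectation P f"
    by unfold_locales (use f in \<open>auto simp: Q_def g_def\<close>)
  \<comment> \<open>Under the tilted law \<open>Q\<close> the mean of \<open>g\<close> is a covariance under \<open>P\<close>, hence small.\<close>
  have "Q.expectation g = measure_pmf.expectation P (\<lambda>y. \<rho> y * g y)"
    unfolding Q_def using \<rho>(1) by (subst integral_density) auto
  also have "\<bar>\<dots>\<bar> \<le> e / 4"
    using measure_pmf_covariance_le_of_ratio_bounded[where P = P and \<rho> = \<rho> and f = f, OF \<rho>(1,2) \<open>0 \<le> e\<close> f] \<rho>(3)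
    unfolding g_def by simp
  finally have "l * Q.expectation g \<le> \<bar>l\<bar> * (e / 4)"
    using abs_ge_self[of "l * Q.expectation g"] mult_left_mono[of _ _ "\<bar>l\<bar>"]
    by (fastforce simp: abs_mult)
  then have "(\<integral>\<^sup>+y. ennreal (exp (l * g y)) \<partial>Q) \<le> ennreal (exp (l\<^sup>2 / 8 + \<bar>l\<bar> * e / 4))"
    by (intro order.trans[OF g.Hoeffdings_lemma_nn_integral_exp_le] ennreal_leI) simp
  then show ?thesis
    unfolding Q_def g_def by (simp add: nn_integral_density)
qed

lemma measure_pmf_tilted_mgf_le:
  fixes P :: "'a pmf" and \<rho> f :: "'a \<Rightarrow> real"
  assumes \<rho>: "\<And>y. 0 \<le> \<rho> y" "\<And>y y'. \<rho> y \<le> exp e * \<rho> y'" and "0 \<le> e"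
    and f: "\<And>y. f y \<in> {0..1}"
  shows "(\<integral>\<^sup>+y. ennreal (\<rho> y * exp (l * (f y - measure_pmf.expectation P f))) \<partial>P)
    \<le> ennreal (exp (l\<^sup>2 / 8 + \<bar>l\<bar> * e / 4)) * (\<integral>\<^sup>+y. ennreal (\<rho> y) \<partial>P)"
proof -
  define \<mu> where "\<mu> = measure_pmf.expectation P \<rho>"
  define E where "E y = exp (l * (f y - measure_pmf.expectation P f))" for y
  interpret \<rho>: interval_bounded_random_variable "measure_pmf P" \<rho> 0 "exp e * \<rho> undefined"
    by unfold_locales (use \<rho> in auto)
  have "0 \<le> \<mu>"
    unfolding \<mu>_def using \<rho>.expectation_in_interval by simp
  have nn_\<rho>: "(\<integral>\<^sup>+y. ennreal (\<rho> y) \<partial>P) = ennreal \<mu>"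
    unfolding \<mu>_def using \<rho>(1) by (intro nn_integral_eq_integral) auto
  show ?thesis
  proof (cases "\<mu> = 0")
    case True
    then have "AE y in P. \<rho> y = 0"
      using integral_nonneg_eq_0_iff_AE[OF \<rho>.integrable] \<rho>(1) unfolding \<mu>_def by auto
    then have "AE y in P. ennreal (\<rho> y * E y) = 0"
      by eventually_elim simp
    then have "(\<integral>\<^sup>+y. ennreal (\<rho> y * E y) \<partial>P) = 0"
      by (simp add: nn_integral_0_iff_AE)
    then show ?thesis
      by (simp add: E_def)
  next
    case False
    with \<open>0 \<le> \<mu>\<close> have "0 < \<mu>"
      by simp
    have "(\<integral>\<^sup>+y. ennreal (\<rho> y * E y) \<partial>P) = ennreal \<mu> * (\<integral>\<^sup>+y. ennreal (\<rho> y / \<mu>) * ennreal (E y) \<partial>P)"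
      using \<rho>(1) \<open>0 < \<mu>\<close> by (subst nn_integral_cmult[symmetric])
        (auto intro!: nn_integral_cong simp: ennreal_mult[symmetric] E_def)
    also have "\<dots> \<le> ennreal \<mu> * ennreal (exp (l\<^sup>2 / 8 + \<bar>l\<bar> * e / 4))"
      using \<rho> \<open>0 < \<mu>\<close> \<open>0 \<le> e\<close> f unfolding E_def
      by (intro mult_left_mono measure_pmf_tilted_mgf_le_of_density)
        (auto simp: divide_simps \<mu>_def mult.commute)
    finally show ?thesis
      unfolding nn_\<rho> E_def by (simp add: mult.commute)
  qed
qed

lemma measure_pmf_tilted_mgf_le_ennreal:
  fixes P :: "'a pmf" and \<rho> :: "'a \<Rightarrow> ennreal" and f :: "'a \<Rightarrow> real"
  assumes \<rho>: "\<And>y y'. \<rho> y \<le> ennreal (exp e) * \<rho> y'" and "0 \<le> e"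
    and f: "\<And>y. f y \<in> {0..1}"
  shows "(\<integral>\<^sup>+y. \<rho> y * ennreal (exp (l * (f y - measure_pmf.expectation P f))) \<partial>P)
    \<le> ennreal (exp (l\<^sup>2 / 8 + \<bar>l\<bar> * e / 4)) * (\<integral>\<^sup>+y. \<rho> y \<partial>P)"
proof (cases "\<exists>y. \<rho> y = \<top>")
  case True
  \<comment> \<open>By the ratio bound, one infinite value of \<open>\<rho>\<close> forces all of them to be infinite.\<close>
  then obtain y\<^sub>0 where "\<rho> y\<^sub>0 = \<top>"
    by blast
  then have "\<rho> y = \<top>" for y
    using \<rho>[of y\<^sub>0 y] by (auto simp: top_unique ennreal_mult_eq_top_iff)
  then show ?thesis
    by (simp add: measure_pmf.emeasure_space_1 ennreal_mult_eq_top_iff)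
next
  case False
  define r where "r y = enn2real (\<rho> y)" for y
  have \<rho>_eq: "\<rho> y = ennreal (r y)" for y
    using False unfolding r_def by (cases "\<rho> y") auto
  have r_nonneg: "0 \<le> r y" for y
    by (simp add: r_def)
  have "r y \<le> exp e * r y'" for y y'
    using \<rho>[of y y'] unfolding \<rho>_eq by (simp add: ennreal_mult[symmetric] r_def)
  then have "(\<integral>\<^sup>+y. ennreal (r y * exp (l * (f y - measure_pmf.expectation P f))) \<partial>P)
      \<le> ennreal (exp (l\<^sup>2 / 8 + \<bar>l\<bar> * e / 4)) * (\<integral>\<^sup>+y. ennreal (r y) \<partial>P)"
    using \<open>0 \<le> e\<close> f by (intro measure_pmf_tilted_mgf_le) (auto simp: r_def)
  then show ?thesis
    by (simp add: \<rho>_eq ennreal_mult r_nonneg)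
qed

section \<open>Densities of a ratio-bounded family of measures\<close>

lemma AE_le_of_nn_set_integral_le:
  fixes f g :: "'a \<Rightarrow> ennreal"
  assumes [measurable]: "f \<in> borel_measurable M" "g \<in> borel_measurable M"
    and finite: "integral\<^sup>N M g \<noteq> \<infinity>"
    and le: "\<And>A. A \<in> sets M \<Longrightarrow> (\<integral>\<^sup>+x. f x * indicator A x \<partial>M) \<le> (\<integral>\<^sup>+x. g x * indicator A x \<partial>M)"
  shows "AE x in M. f x \<le> g x"
proof -
  define N where "N = {x \<in> space M. g x < f x}"
  have [measurable]: "N \<in> sets M"
    unfolding N_def by measurable
  have "(\<integral>\<^sup>+x. g x * indicator N x \<partial>M) \<le> integral\<^sup>N M g"
    by (intro nn_integral_mono) (auto split: split_indicator)
  then have finite_N: "(\<integral>\<^sup>+x. g x * indicator N x \<partial>M) \<noteq> \<infinity>"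
    using finite by (auto simp: top_unique)
  have "(\<integral>\<^sup>+x. f x * indicator N x - g x * indicator N x \<partial>M)
      = (\<integral>\<^sup>+x. f x * indicator N x \<partial>M) - (\<integral>\<^sup>+x. g x * indicator N x \<partial>M)"
    using finite_N by (intro nn_integral_diff) (auto simp: N_def split: split_indicator)
  also have "\<dots> = 0"
    using le[of N] finite_N by (simp add: diff_eq_0_iff_ennreal top.not_eq_extremum order.strict_trans1)
  finally have "AE x in M. f x * indicator N x - g x * indicator N x = 0"
    by (subst (asm) nn_integral_0_iff_AE) auto
  then show ?thesis
  proof (rule AE_mp[OF _ AE_I2], intro impI)
    fix x assume "x \<in> space M" "f x * indicator N x - g x * indicator N x = 0"
    then show "f x \<le> g x"
      by (cases "g x < f x") (auto simp: N_def dest: ennreal_minus_eq_0)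
  qed
qed

lemma absolutely_continuous_of_measure_le:
  assumes "finite_measure M" "finite_measure N" "sets N = sets M"
    and le: "\<And>X. X \<in> sets M \<Longrightarrow> measure N X \<le> c * measure M X"
  shows "absolutely_continuous M N"
  unfolding absolutely_continuous_def
proof
  fix X assume X: "X \<in> null_sets M"
  then have "measure N X \<le> 0"
    using le[of X] by (auto simp: null_sets_def finite_measure.emeasure_eq_measure[OF assms(1)])
  then show "X \<in> null_sets N"
    using X assms(3) measure_nonneg[of N X]
    by (auto simp: null_sets_def finite_measure.emeasure_eq_measure[OF assms(2)])
qed

lemma (in sigma_finite_measure) AE_RN_deriv_le_of_measure_le:
  assumes finite: "finite_measure N\<^sub>1" "finite_measure N\<^sub>2"
    and sets: "sets N\<^sub>1 = sets M" "sets N\<^sub>2 = sets M"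
    and ac: "absolutely_continuous M N\<^sub>1" "absolutely_continuous M N\<^sub>2"
    and le: "\<And>X. X \<in> sets M \<Longrightarrow> measure N\<^sub>1 X \<le> c * measure N\<^sub>2 X" and "0 \<le> c"
  shows "AE x in M. RN_deriv M N\<^sub>1 x \<le> ennreal c * RN_deriv M N\<^sub>2 x"
proof -
  have set_integral: "(\<integral>\<^sup>+x. RN_deriv M N x * indicator A x \<partial>M) = emeasure N A"
    if "absolutely_continuous M N" "sets N = sets M" "A \<in> sets M" for N A
    using RN_deriv_nn_integral[OF that(1,2), of "indicator A"] that by simp
  show ?thesis
  proof (rule AE_le_of_nn_set_integral_le)
    have "(\<integral>\<^sup>+x. ennreal c * RN_deriv M N\<^sub>2 x \<partial>M) = ennreal c * emeasure N\<^sub>2 (space M)"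
      using set_integral[OF ac(2) sets(2) sets.top] by (simp add: nn_integral_cmult)
    then show "(\<integral>\<^sup>+x. ennreal c * RN_deriv M N\<^sub>2 x \<partial>M) \<noteq> \<infinity>"
      using finite_measure.emeasure_finite[OF finite(2)] by (simp add: ennreal_mult_eq_top_iff)
  next
    fix A assume A: "A \<in> sets M"
    have "(\<integral>\<^sup>+x. RN_deriv M N\<^sub>1 x * indicator A x \<partial>M) = ennreal (measure N\<^sub>1 A)"
      using set_integral[OF ac(1) sets(1) A] finite_measure.emeasure_eq_measure[OF finite(1)] by simp
    also have "\<dots> \<le> ennreal c * ennreal (measure N\<^sub>2 A)"
      using le[OF A] \<open>0 \<le> c\<close> by (simp add: ennreal_mult[symmetric])
    also have "\<dots> = (\<integral>\<^sup>+x. ennreal c * RN_deriv M N\<^sub>2 x * indicator A x \<partial>M)"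
      using set_integral[OF ac(2) sets(2) A] finite_measure.emeasure_eq_measure[OF finite(2)] A
      by (simp add: nn_integral_cmult mult.assoc)
    finally show "(\<integral>\<^sup>+x. RN_deriv M N\<^sub>1 x * indicator A x \<partial>M)
        \<le> (\<integral>\<^sup>+x. ennreal c * RN_deriv M N\<^sub>2 x * indicator A x \<partial>M)" .
  qed auto
qed

lemma ratio_bounded_family_RN_deriv:
  fixes \<mu> :: "'i::countable \<Rightarrow> 'b measure"
  assumes prob: "\<And>i. prob_space (\<mu> i)" and sets: "\<And>i. sets (\<mu> i) = sets (\<mu> j)"
    and ratio: "\<And>i i' X. X \<in> sets (\<mu> j) \<Longrightarrow> measure (\<mu> i) X \<le> c * measure (\<mu> i') X"
    and "0 \<le> c"
  shows "absolutely_continuous (\<mu> j) (\<mu> i)"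
    and "AE x in \<mu> j. \<forall>i i'. RN_deriv (\<mu> j) (\<mu> i) x \<le> ennreal c * RN_deriv (\<mu> j) (\<mu> i') x"
proof -
  interpret prob_space "\<mu> j"
    by (rule prob)
  have finite: "finite_measure (\<mu> i)" for i
    using prob by (rule prob_space.finite_measure)
  show ac: "absolutely_continuous (\<mu> j) (\<mu> i)" for i
    using ratio[where i = i and i' = j] finite sets by (intro absolutely_continuous_of_measure_le) auto
  show "AE x in \<mu> j. \<forall>i i'. RN_deriv (\<mu> j) (\<mu> i) x \<le> ennreal c * RN_deriv (\<mu> j) (\<mu> i') x"
    unfolding AE_all_countable using finite sets ac ratio \<open>0 \<le> c\<close>
    by (intro allI AE_RN_deriv_le_of_measure_le) auto
qed

section \<open>One sample point at a time\<close>

lemma nn_integral_measure_pmf_swap: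
  fixes p :: "'a::countable pmf" and f :: "'a \<Rightarrow> 'b \<Rightarrow> ennreal"
  assumes "\<And>y. f y \<in> borel_measurable M"
  shows "(\<integral>\<^sup>+y. \<integral>\<^sup>+x. f y x \<partial>M \<partial>p) = (\<integral>\<^sup>+x. \<integral>\<^sup>+y. f y x \<partial>p \<partial>M)"
proof -
  have "(\<integral>\<^sup>+y. \<integral>\<^sup>+x. f y x \<partial>M \<partial>p) = (\<integral>\<^sup>+y. \<integral>\<^sup>+x. ennreal (pmf p y) * f y x \<partial>M \<partial>count_space UNIV)"
    using assms by (simp add: nn_integral_measure_pmf nn_integral_cmult)
  also have "\<dots> = (\<integral>\<^sup>+x. \<integral>\<^sup>+y. ennreal (pmf p y) * f y x \<partial>count_space UNIV \<partial>M)"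
    using assms by (intro nn_integral_count_space_nn_integral[symmetric]) auto
  also have "\<dots> = (\<integral>\<^sup>+x. \<integral>\<^sup>+y. f y x \<partial>p \<partial>M)"
    by (simp add: nn_integral_measure_pmf)
  finally show ?thesis .
qed

lemma nn_integral_replicate_pmf_Suc:
  fixes p :: "'a::countable pmf"
  shows "(\<integral>\<^sup>+xs. f xs \<partial>replicate_pmf (Suc n) p) = (\<integral>\<^sup>+xs. \<integral>\<^sup>+x. f (x # xs) \<partial>p \<partial>replicate_pmf n p)"
proof -
  have "(\<integral>\<^sup>+xs. f xs \<partial>replicate_pmf (Suc n) p) = (\<integral>\<^sup>+x. \<integral>\<^sup>+xs. f (x # xs) \<partial>replicate_pmf n p \<partial>p)"
    by simp
  also have "\<dots> = (\<integral>\<^sup>+xs. \<integral>\<^sup>+x. f (x # xs) \<partial>p \<partial>replicate_pmf n p)"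
    by (rule nn_integral_measure_pmf_swap) simp
  finally show ?thesis .
qed

lemma nn_integral_mixture_le:
  fixes p :: "'a::countable pmf" and r :: "'a \<Rightarrow> 'b \<Rightarrow> ennreal" and w :: "'b \<Rightarrow> 'a \<Rightarrow> ennreal"
  assumes [measurable]: "\<And>y. r y \<in> borel_measurable M" "\<And>y. (\<lambda>x. w x y) \<in> borel_measurable M"
    "R \<in> borel_measurable M"
    and le: "AE x in M. (\<integral>\<^sup>+y. r y x * w x y \<partial>p) \<le> C * (\<integral>\<^sup>+y. r y x \<partial>p)"
  shows "(\<integral>\<^sup>+y. \<integral>\<^sup>+x. r y x * (w x y * R x) \<partial>M \<partial>p) \<le> C * (\<integral>\<^sup>+y. \<integral>\<^sup>+x. r y x * R x \<partial>M \<partial>p)"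
proof -
  have "(\<integral>\<^sup>+y. \<integral>\<^sup>+x. r y x * (w x y * R x) \<partial>M \<partial>p) = (\<integral>\<^sup>+x. R x * (\<integral>\<^sup>+y. r y x * w x y \<partial>p) \<partial>M)"
    by (subst nn_integral_measure_pmf_swap) (auto simp: nn_integral_cmult[symmetric] mult_ac)
  also have "\<dots> \<le> (\<integral>\<^sup>+x. R x * (C * (\<integral>\<^sup>+y. r y x \<partial>p)) \<partial>M)"
  proof (rule nn_integral_mono_AE)
    show "AE x in M. R x * (\<integral>\<^sup>+y. r y x * w x y \<partial>p) \<le> R x * (C * (\<integral>\<^sup>+y. r y x \<partial>p))"
      using le by eventually_elim (simp add: mult_left_mono)
  qed
  also have "\<dots> = C * (\<integral>\<^sup>+y. \<integral>\<^sup>+x. r y x * R x \<partial>M \<partial>p)"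
    by (subst nn_integral_measure_pmf_swap)
      (auto simp: nn_integral_cmult[symmetric] mult_ac intro!: nn_integral_cong)
  finally show ?thesis .
qed

lemma measurable_eval_out_space [measurable]:
  "(\<lambda>\<phi>. \<phi> y) \<in> borel_measurable (out_space :: ('a \<Rightarrow> real) measure)"
  unfolding out_space_def by (rule measurable_component_singleton) simp

lemma measurable_pop_mean [measurable]:
  "pop_mean (P :: 'a::countable pmf) \<in> borel_measurable out_space"
proof -
  have "(\<lambda>q. fst q (snd q)) \<in> borel_measurable (out_space \<Otimes>\<^sub>M measure_pmf P)"
    by (rule measurable_compose_countable[where f = "\<lambda>y q. fst q y"]) auto
  then show ?thesis
    unfolding pop_mean_def by (intro measure_pmf.borel_measurable_lebesgue_integral) (simp add: case_prod_beta)
qed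

lemma nn_integral_tilted_le_of_ratio_bounded:
  fixes \<mu> :: "'a::countable \<Rightarrow> ('a \<Rightarrow> real) measure" and P :: "'a pmf"
    and R :: "('a \<Rightarrow> real) \<Rightarrow> ennreal"
  assumes prob: "\<And>y. prob_space (\<mu> y)" and sets: "\<And>y. sets (\<mu> y) = sets out_space"
    and ratio: "\<And>y y' X. X \<in> sets out_space \<Longrightarrow> measure (\<mu> y) X \<le> exp e * measure (\<mu> y') X"
    and "0 \<le> e"
    and bounded: "\<And>y. AE \<phi> in \<mu> y. \<forall>z. \<phi> z \<in> {0..1}"
    and [measurable]: "R \<in> borel_measurable out_space"
  shows "(\<integral>\<^sup>+y. \<integral>\<^sup>+\<phi>. ennreal (exp (l * (\<phi> y - pop_mean P \<phi>))) * R \<phi> \<partial>\<mu> y \<partial>P)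
    \<le> ennreal (exp (l\<^sup>2 / 8 + \<bar>l\<bar> * e / 4)) * (\<integral>\<^sup>+y. \<integral>\<^sup>+\<phi>. R \<phi> \<partial>\<mu> y \<partial>P)"
proof -
  define C where "C = ennreal (exp (l\<^sup>2 / 8 + \<bar>l\<bar> * e / 4))"
  \<comment> \<open>Any member of the family serves as the reference measure.\<close>
  define \<nu> where "\<nu> = \<mu> undefined"
  define r where "r y = RN_deriv \<nu> (\<mu> y)" for y
  define w where "w \<phi> y = ennreal (exp (l * (\<phi> y - pop_mean P \<phi>)))" for \<phi> y
  interpret \<nu>: prob_space \<nu>
    unfolding \<nu>_def by (rule prob)
  have sets_\<nu>: "sets \<nu> = sets out_space" and sets_\<mu>: "sets (\<mu> y) = sets \<nu>" for y
    unfolding \<nu>_def using sets by auto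
  have measurable_\<nu>: "borel_measurable \<nu> = borel_measurable out_space"
    by (rule measurable_cong_sets[OF sets_\<nu> refl])
  have [measurable]: "r y \<in> borel_measurable out_space" for y
    unfolding r_def measurable_\<nu>[symmetric] by simp
  have [measurable]: "(\<lambda>\<phi>. w \<phi> y) \<in> borel_measurable out_space" for y
    unfolding w_def by measurable
  note densities = ratio_bounded_family_RN_deriv[where \<mu> = \<mu> and j = undefined and c = "exp e",
      folded \<nu>_def, OF prob sets_\<mu> ratio[unfolded sets_\<nu>[symmetric]] exp_ge_zero]
  have integral_\<mu>: "integral\<^sup>N (\<mu> y) F = (\<integral>\<^sup>+\<phi>. r y \<phi> * F \<phi> \<partial>\<nu>)" if "F \<in> borel_measurable out_space" for y F
    unfolding r_def using that measurable_\<nu> by (intro \<nu>.RN_deriv_nn_integral densities(1) sets_\<mu>) auto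
  \<comment> \<open>For each output \<open>\<phi>\<close>, tilt \<open>P\<close> by the ratio-bounded weights \<open>y \<mapsto> r y \<phi>\<close>.\<close>
  have "AE \<phi> in \<nu>. \<forall>y y'. r y \<phi> \<le> ennreal (exp e) * r y' \<phi>"
    using densities(2) unfolding r_def .
  moreover have "AE \<phi> in \<nu>. \<forall>z. \<phi> z \<in> {0..1}"
    unfolding \<nu>_def by (rule bounded)
  ultimately have tilted: "AE \<phi> in \<nu>. (\<integral>\<^sup>+y. r y \<phi> * w \<phi> y \<partial>P) \<le> C * (\<integral>\<^sup>+y. r y \<phi> \<partial>P)"
    unfolding w_def C_def pop_mean_def
    by eventually_elim (auto intro: measure_pmf_tilted_mgf_le_ennreal[OF _ \<open>0 \<le> e\<close>])
  have "(\<integral>\<^sup>+y. \<integral>\<^sup>+\<phi>. w \<phi> y * R \<phi> \<partial>\<mu> y \<partial>P) = (\<integral>\<^sup>+y. \<integral>\<^sup>+\<phi>. r y \<phi> * (w \<phi> y * R \<phi>) \<partial>\<nu> \<partial>P)"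
    by (intro nn_integral_cong integral_\<mu>) measurable
  also have "\<dots> \<le> C * (\<integral>\<^sup>+y. \<integral>\<^sup>+\<phi>. r y \<phi> * R \<phi> \<partial>\<nu> \<partial>P)"
    using tilted by (intro nn_integral_mixture_le) (simp_all add: measurable_\<nu>)
  also have "(\<integral>\<^sup>+y. \<integral>\<^sup>+\<phi>. r y \<phi> * R \<phi> \<partial>\<nu> \<partial>P) = (\<integral>\<^sup>+y. \<integral>\<^sup>+\<phi>. R \<phi> \<partial>\<mu> y \<partial>P)"
    by (intro nn_integral_cong integral_\<mu>[symmetric]) measurable
  finally show ?thesis
    unfolding C_def w_def .
qed

lemma adjacent_append_Cons:
  assumes "y \<noteq> y'"
  shows "adjacent (pre @ y # suf) (pre @ y' # suf)"
proof -
  have "{i. i < length (pre @ y # suf) \<and> (pre @ y # suf) ! i \<noteq> (pre @ y' # suf) ! i} = {length pre}"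
    using assms by (auto simp: nth_append nth_Cons' split: if_splits)
  then show ?thesis
    unfolding adjacent_def by simp
qed

lemma differentially_private_mono:
  assumes "differentially_private \<epsilon> n A" "\<epsilon> \<le> \<epsilon>'"
  shows "differentially_private \<epsilon>' n A"
  unfolding differentially_private_def
proof (intro allI impI)
  fix x y :: "'a list" and T :: "('a \<Rightarrow> real) set" assume "length x = n \<and> length y = n \<and> adjacent x y \<and> T \<in> sets out_space"
  then have "measure (A x) T \<le> exp \<epsilon> * measure (A y) T"
    using assms(1) unfolding differentially_private_def by blast
  also have "\<dots> \<le> exp \<epsilon>' * measure (A y) T"
    using assms(2) by (intro mult_right_mono) auto
  finally show "measure (A x) T \<le> exp \<epsilon>' * measure (A y) T" .
qed

lemma differentially_private_replace_one:
  assumes "differentially_private e n A" "0 \<le> e"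
    and "length (pre @ y # suf) = n" "X \<in> sets out_space"
  shows "measure (A (pre @ y # suf)) X \<le> exp e * measure (A (pre @ y' # suf)) X"
proof (cases "y = y'")
  case True
  then show ?thesis
    using assms(2) measure_nonneg[of "A (pre @ y' # suf)" X] by (simp add: mult_le_cancel_right1)
next
  case False
  then show ?thesis
    using assms adjacent_append_Cons[OF False] unfolding differentially_private_def by simp
qed

lemma differentially_private_tilted_step:
  fixes A :: "'a::countable list \<Rightarrow> ('a \<Rightarrow> real) measure" and P :: "'a pmf"
  assumes alg: "is_algorithm n A"
    and bounded: "\<And>x. length x = n \<Longrightarrow> AE \<phi> in A x. \<forall>z. \<phi> z \<in> {0..1}"
    and dp: "differentially_private e n A" and "0 \<le> e"
    and len: "length pre + Suc (length suf) = n"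
    and [measurable]: "R \<in> borel_measurable out_space"
  shows "(\<integral>\<^sup>+y. \<integral>\<^sup>+\<phi>. ennreal (exp (l * (\<phi> y - pop_mean P \<phi>))) * R \<phi> \<partial>A (pre @ y # suf) \<partial>P)
    \<le> ennreal (exp (l\<^sup>2 / 8 + \<bar>l\<bar> * e / 4)) * (\<integral>\<^sup>+y. \<integral>\<^sup>+\<phi>. R \<phi> \<partial>A (pre @ y # suf) \<partial>P)"
proof (rule nn_integral_tilted_le_of_ratio_bounded)
  have len_y: "length (pre @ y # suf) = n" for y
    using len by simp
  show "prob_space (A (pre @ y # suf))" "sets (A (pre @ y # suf)) = sets out_space" for y
    using alg len_y unfolding is_algorithm_def by auto
  show "AE \<phi> in A (pre @ y # suf). \<forall>z. \<phi> z \<in> {0..1}" for y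
    by (rule bounded[OF len_y])
  show "measure (A (pre @ y # suf)) X \<le> exp e * measure (A (pre @ y' # suf)) X"
    if "X \<in> sets out_space" for y y' X
    by (rule differentially_private_replace_one[OF dp \<open>0 \<le> e\<close> len_y that])
qed (use \<open>0 \<le> e\<close> in auto)

lemma differentially_private_tilted_suffix:
  fixes A :: "'a::countable list \<Rightarrow> ('a \<Rightarrow> real) measure" and P :: "'a pmf"
  assumes alg: "is_algorithm n A"
    and bounded: "\<And>x. length x = n \<Longrightarrow> AE \<phi> in A x. \<forall>z. \<phi> z \<in> {0..1}"
    and dp: "differentially_private e n A" and "0 \<le> e"
  shows "length pre + j = n \<Longrightarrow> R \<in> borel_measurable out_space \<Longrightarrow>
    (\<integral>\<^sup>+suf. \<integral>\<^sup>+\<phi>. (\<Prod>z\<leftarrow>suf. ennreal (exp (l * (\<phi> z - pop_mean P \<phi>)))) * R \<phi> \<partial>A (pre @ suf) \<partial>replicate_pmf j P)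
      \<le> ennreal (exp (l\<^sup>2 / 8 + \<bar>l\<bar> * e / 4)) ^ j * (\<integral>\<^sup>+suf. \<integral>\<^sup>+\<phi>. R \<phi> \<partial>A (pre @ suf) \<partial>replicate_pmf j P)"
proof (induction j arbitrary: pre R)
  case 0
  then show ?case
    by simp
next
  case (Suc j)
  note [measurable] = Suc.prems(2)
  define C where "C = ennreal (exp (l\<^sup>2 / 8 + \<bar>l\<bar> * e / 4))"
  define w where "w \<phi> z = ennreal (exp (l * (\<phi> z - pop_mean P \<phi>)))" for \<phi> z
  have [measurable]: "(\<lambda>\<phi>. w \<phi> y) \<in> borel_measurable out_space" for y
    unfolding w_def by measurable
  \<comment> \<open>Peel off the first point of the suffix: the induction hypothesis handles the rest, with
    \<open>w \<phi> y * R \<phi>\<close> in place of \<open>R\<close>, and the tilted step handles the point itself.\<close>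
  have "(\<integral>\<^sup>+suf. \<integral>\<^sup>+\<phi>. (\<Prod>z\<leftarrow>suf. w \<phi> z) * R \<phi> \<partial>A (pre @ suf) \<partial>replicate_pmf (Suc j) P)
      = (\<integral>\<^sup>+y. \<integral>\<^sup>+s. \<integral>\<^sup>+\<phi>. (\<Prod>z\<leftarrow>s. w \<phi> z) * (w \<phi> y * R \<phi>) \<partial>A ((pre @ [y]) @ s) \<partial>replicate_pmf j P \<partial>P)"
    by (simp add: mult_ac)
  also have "\<dots> \<le> (\<integral>\<^sup>+y. C ^ j * \<integral>\<^sup>+s. \<integral>\<^sup>+\<phi>. w \<phi> y * R \<phi> \<partial>A (pre @ y # s) \<partial>replicate_pmf j P \<partial>P)"
    using Suc.IH[of "pre @ [y]" "\<lambda>\<phi>. w \<phi> y * R \<phi>" for y] Suc.prems(1)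
    by (intro nn_integral_mono) (simp add: C_def w_def)
  also have "\<dots> = C ^ j * (\<integral>\<^sup>+y. \<integral>\<^sup>+s. \<integral>\<^sup>+\<phi>. w \<phi> y * R \<phi> \<partial>A (pre @ y # s) \<partial>replicate_pmf j P \<partial>P)"
    by (rule nn_integral_cmult) simp
  also have "(\<integral>\<^sup>+y. \<integral>\<^sup>+s. \<integral>\<^sup>+\<phi>. w \<phi> y * R \<phi> \<partial>A (pre @ y # s) \<partial>replicate_pmf j P \<partial>P)
      = (\<integral>\<^sup>+s. \<integral>\<^sup>+y. \<integral>\<^sup>+\<phi>. w \<phi> y * R \<phi> \<partial>A (pre @ y # s) \<partial>P \<partial>replicate_pmf j P)"
    by (rule nn_integral_measure_pmf_swap) simp
  also have "C ^ j * \<dots> \<le> C ^ j * (\<integral>\<^sup>+s. C * \<integral>\<^sup>+y. \<integral>\<^sup>+\<phi>. R \<phi> \<partial>A (pre @ y # s) \<partial>P \<partial>replicate_pmf j P)"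
  proof (rule mult_left_mono[OF nn_integral_mono_AE[OF AE_pmfI]])
    fix s assume "s \<in> set_pmf (replicate_pmf j P)"
    then have "length pre + Suc (length s) = n"
      using Suc.prems(1) by (simp add: set_replicate_pmf)
    then show "(\<integral>\<^sup>+y. \<integral>\<^sup>+\<phi>. w \<phi> y * R \<phi> \<partial>A (pre @ y # s) \<partial>P) \<le> C * \<integral>\<^sup>+y. \<integral>\<^sup>+\<phi>. R \<phi> \<partial>A (pre @ y # s) \<partial>P"
      unfolding w_def C_def by (intro differentially_private_tilted_step[OF alg bounded dp \<open>0 \<le> e\<close>]) auto
  qed simp
  also have "\<dots> = C ^ Suc j * (\<integral>\<^sup>+s. \<integral>\<^sup>+y. \<integral>\<^sup>+\<phi>. R \<phi> \<partial>A (pre @ y # s) \<partial>P \<partial>replicate_pmf j P)"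
    by (simp add: nn_integral_cmult mult_ac)
  also have "(\<integral>\<^sup>+s. \<integral>\<^sup>+y. \<integral>\<^sup>+\<phi>. R \<phi> \<partial>A (pre @ y # s) \<partial>P \<partial>replicate_pmf j P)
      = (\<integral>\<^sup>+suf. \<integral>\<^sup>+\<phi>. R \<phi> \<partial>A (pre @ suf) \<partial>replicate_pmf (Suc j) P)"
    by (rule nn_integral_replicate_pmf_Suc[symmetric])
  finally show ?case
    unfolding C_def w_def .
qed

section \<open>The Chernoff bound\<close>

lemma prod_list_ennreal_exp:
  "(\<Prod>z\<leftarrow>xs. ennreal (exp (f z))) = ennreal (exp (\<Sum>z\<leftarrow>xs. f z))"
  by (induction xs) (simp_all add: exp_add ennreal_mult)

lemma measurable_deviation_sum [measurable]:
  "(\<lambda>\<phi>. \<Sum>z\<leftarrow>S. \<phi> z - pop_mean (P :: 'a::countable pmf) \<phi>) \<in> borel_measurable out_space"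
  by (induction S) simp_all

lemma deviation_sum_eq_emp_mean:
  assumes "S \<noteq> []"
  shows "(\<Sum>z\<leftarrow>S. \<phi> z - c) = real (length S) * (emp_mean S \<phi> - c)"
proof -
  have "(\<Sum>z\<leftarrow>S. \<phi> z - c) = (\<Sum>z\<leftarrow>S. \<phi> z) - real (length S) * c"
    by (induction S) (simp_all add: algebra_simps)
  then show ?thesis
    using assms by (simp add: emp_mean_def algebra_simps)
qed

lemma differentially_private_joint_mgf_le:
  fixes A :: "'a::countable list \<Rightarrow> ('a \<Rightarrow> real) measure" and P :: "'a pmf"
  assumes alg: "is_algorithm n A"
    and bounded: "\<And>x. length x = n \<Longrightarrow> AE \<phi> in A x. \<forall>z. \<phi> z \<in> {0..1}"
    and dp: "differentially_private e n A" and "0 \<le> e"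
  shows "(\<integral>\<^sup>+S. \<integral>\<^sup>+\<phi>. ennreal (exp (l * (\<Sum>z\<leftarrow>S. \<phi> z - pop_mean P \<phi>))) \<partial>A S \<partial>replicate_pmf n P)
    \<le> ennreal (exp (l\<^sup>2 / 8 + \<bar>l\<bar> * e / 4)) ^ n"
proof -
  have "(\<integral>\<^sup>+S. \<integral>\<^sup>+\<phi>. 1 \<partial>A S \<partial>replicate_pmf n P) = (\<integral>\<^sup>+S. 1 \<partial>replicate_pmf n P)"
  proof (intro nn_integral_cong_AE AE_pmfI)
    fix S assume "S \<in> set_pmf (replicate_pmf n P)"
    then have "prob_space (A S)"
      using alg unfolding is_algorithm_def by (simp add: set_replicate_pmf)
    then show "(\<integral>\<^sup>+\<phi>. 1 \<partial>A S) = 1"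
      by (simp add: prob_space.emeasure_space_1)
  qed
  then have "(\<integral>\<^sup>+S. \<integral>\<^sup>+\<phi>. 1 \<partial>A S \<partial>replicate_pmf n P) = 1"
    by (simp add: measure_pmf.emeasure_space_1)
  then show ?thesis
    using differentially_private_tilted_suffix[OF alg bounded dp \<open>0 \<le> e\<close>, where pre = "[]" and j = n and R = "\<lambda>_. 1" and P = P and l = l]
    by (simp add: prod_list_ennreal_exp sum_list_const_mult)
qed

lemma one_le_exp_two_sided:
  fixes l t s :: real
  assumes "0 \<le> l" "t \<le> \<bar>s\<bar>"
  shows "1 \<le> exp (- (l * t)) * (exp (l * s) + exp (- (l * s)))"
proof -
  have "l * t \<le> l * \<bar>s\<bar>"
    by (rule mult_left_mono[OF assms(2,1)])
  then have "1 \<le> exp (- (l * t)) * exp (l * \<bar>s\<bar>)"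
    by (simp add: exp_add[symmetric])
  also have "exp (l * \<bar>s\<bar>) \<le> exp (l * s) + exp (- (l * s))"
    by (cases "0 \<le> s") auto
  finally show ?thesis
    by (simp add: mult_left_mono)
qed

lemma measure_emp_mean_deviation_le:
  fixes M :: "('a::countable \<Rightarrow> real) measure" and P :: "'a pmf"
  assumes "prob_space M" "sets M = sets out_space" "S \<noteq> []" "0 \<le> l"
  shows "ennreal (measure M {\<phi> \<in> space M. \<tau> < \<bar>pop_mean P \<phi> - emp_mean S \<phi>\<bar>})
    \<le> ennreal (exp (- (l * real (length S) * \<tau>))) *
      ((\<integral>\<^sup>+\<phi>. ennreal (exp (l * (\<Sum>z\<leftarrow>S. \<phi> z - pop_mean P \<phi>))) \<partial>M)
        + (\<integral>\<^sup>+\<phi>. ennreal (exp (- l * (\<Sum>z\<leftarrow>S. \<phi> z - pop_mean P \<phi>))) \<partial>M))"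
proof -
  interpret prob_space M by fact
  define X where "X = {\<phi> \<in> space M. \<tau> < \<bar>pop_mean P \<phi> - emp_mean S \<phi>\<bar>}"
  define D where "D \<phi> = (\<Sum>z\<leftarrow>S. \<phi> z - pop_mean P \<phi>)" for \<phi>
  define a where "a = exp (- (l * real (length S) * \<tau>))"
  have [measurable]: "D \<in> borel_measurable M"
    unfolding D_def measurable_cong_sets[OF assms(2) refl] by measurable
  have "ennreal (measure M X) \<le> (\<integral>\<^sup>+\<phi>. indicator X \<phi> \<partial>M)"
    by (cases "X \<in> sets M") (simp_all add: emeasure_eq_measure measure_notin_sets)
  also have "\<dots> \<le> (\<integral>\<^sup>+\<phi>. ennreal a * (ennreal (exp (l * D \<phi>)) + ennreal (exp (- l * D \<phi>))) \<partial>M)"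
  proof (intro nn_integral_mono)
    fix \<phi>
    \<comment> \<open>Markov's inequality for \<open>exp (l D) + exp (-l D)\<close>, with \<open>D = n (E\<^sub>S[\<phi>] - P[\<phi>])\<close>.\<close>
    have "real (length S) * \<tau> \<le> \<bar>D \<phi>\<bar>" if "\<phi> \<in> X"
      using that \<open>S \<noteq> []\<close>
      by (simp add: X_def D_def deviation_sum_eq_emp_mean abs_mult abs_minus_commute)
    then show "indicator X \<phi> \<le> ennreal a * (ennreal (exp (l * D \<phi>)) + ennreal (exp (- l * D \<phi>)))"
      using one_le_exp_two_sided[OF \<open>0 \<le> l\<close>, of _ "D \<phi>"]
      by (auto simp: a_def indicator_def ennreal_mult[symmetric] ennreal_plus[symmetric] mult.assoc
          simp del: ennreal_plus)
  qed
  also have "\<dots> = ennreal a * ((\<integral>\<^sup>+\<phi>. ennreal (exp (l * D \<phi>)) \<partial>M) + (\<integral>\<^sup>+\<phi>. ennreal (exp (- l * D \<phi>)) \<partial>M))"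
    by (simp add: nn_integral_cmult nn_integral_add)
  finally show ?thesis
    unfolding X_def D_def a_def .
qed

lemma differentially_private_deviation_le:
  fixes A :: "'a::countable list \<Rightarrow> ('a \<Rightarrow> real) measure" and P :: "'a pmf"
  assumes "0 < n" and alg: "is_algorithm n A"
    and bounded: "\<And>x. length x = n \<Longrightarrow> AE \<phi> in A x. \<forall>z. \<phi> z \<in> {0..1}"
    and dp: "differentially_private e n A" and "0 \<le> e" and "0 \<le> l"
  shows "measure_pmf.expectation (replicate_pmf n P)
      (\<lambda>S. measure (A S) {\<phi> \<in> space (A S). \<tau> < \<bar>pop_mean P \<phi> - emp_mean S \<phi>\<bar>})
    \<le> 2 * exp (- (l * real n * \<tau>)) * exp (l\<^sup>2 / 8 + l * e / 4) ^ n"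
proof -
  define F where "F S = measure (A S) {\<phi> \<in> space (A S). \<tau> < \<bar>pop_mean P \<phi> - emp_mean S \<phi>\<bar>}" for S
  define mgf where "mgf S l' = (\<integral>\<^sup>+\<phi>. ennreal (exp (l' * (\<Sum>z\<leftarrow>S. \<phi> z - pop_mean P \<phi>))) \<partial>A S)" for S l'
  define a where "a = exp (- (l * real n * \<tau>))"
  define C where "C = ennreal (exp (l\<^sup>2 / 8 + l * e / 4))"
  have "(\<integral>\<^sup>+S. ennreal (F S) \<partial>replicate_pmf n P) \<le> (\<integral>\<^sup>+S. ennreal a * (mgf S l + mgf S (- l)) \<partial>replicate_pmf n P)"
  proof (intro nn_integral_mono_AE AE_pmfI)
    fix S assume "S \<in> set_pmf (replicate_pmf n P)"
    then have "length S = n"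
      by (simp add: set_replicate_pmf)
    moreover have "prob_space (A S)" "sets (A S) = sets out_space"
      using alg \<open>length S = n\<close> unfolding is_algorithm_def by auto
    ultimately show "ennreal (F S) \<le> ennreal a * (mgf S l + mgf S (- l))"
      unfolding F_def a_def mgf_def using \<open>0 < n\<close> \<open>0 \<le> l\<close>
        measure_emp_mean_deviation_le[where M = "A S" and S = S and l = l and P = P and \<tau> = \<tau>] by auto
  qed
  also have "\<dots> = ennreal a * ((\<integral>\<^sup>+S. mgf S l \<partial>replicate_pmf n P) + (\<integral>\<^sup>+S. mgf S (- l) \<partial>replicate_pmf n P))"
    by (simp add: nn_integral_cmult nn_integral_add)
  also have "\<dots> \<le> ennreal a * (C ^ n + C ^ n)"
    using differentially_private_joint_mgf_le[OF alg bounded dp \<open>0 \<le> e\<close>, where P = P and l = l]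
      differentially_private_joint_mgf_le[OF alg bounded dp \<open>0 \<le> e\<close>, where P = P and l = "- l"] \<open>0 \<le> l\<close>
    unfolding mgf_def C_def by (intro mult_left_mono[OF add_mono]) simp_all
  also have "\<dots> = ennreal (2 * a * exp (l\<^sup>2 / 8 + l * e / 4) ^ n)"
    unfolding C_def mult_2[symmetric] a_def by (simp add: ennreal_mult ennreal_power mult_ac)
  finally have nn: "(\<integral>\<^sup>+S. ennreal (F S) \<partial>replicate_pmf n P) \<le> ennreal (2 * a * exp (l\<^sup>2 / 8 + l * e / 4) ^ n)" .
  have "measure_pmf.expectation (replicate_pmf n P) F = enn2real (\<integral>\<^sup>+S. ennreal (F S) \<partial>replicate_pmf n P)"
    by (rule integral_eq_nn_integral) (simp_all add: F_def)
  also have "\<dots> \<le> 2 * a * exp (l\<^sup>2 / 8 + l * e / 4) ^ n"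
    by (rule enn2real_leI[OF _ nn]) (simp add: a_def)
  finally show ?thesis
    unfolding F_def a_def .
qed

lemma chernoff_bound_at_optimal_parameter:
  fixes e \<tau> :: real and n :: nat
  assumes "0 \<le> e" "e \<le> \<tau>"
  defines "l \<equiv> 4 * \<tau> - e"
  shows "exp (- (l * real n * \<tau>)) * exp (l\<^sup>2 / 8 + l * e / 4) ^ n \<le> exp (- (\<tau>\<^sup>2 * real n))"
proof -
  have "exp (- (l * real n * \<tau>)) * exp (l\<^sup>2 / 8 + l * e / 4) ^ n
      = exp (- (l * real n * \<tau>) + real n * (l\<^sup>2 / 8 + l * e / 4))"
    by (simp only: exp_add exp_of_nat_mult)
  \<comment> \<open>\<open>l = 4\<tau> - e\<close> minimises this exponent, which then equals \<open>-n l\<^sup>2 / 8\<close>.\<close>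
  also have "- (l * real n * \<tau>) + real n * (l\<^sup>2 / 8 + l * e / 4) = - (real n * l\<^sup>2 / 8)"
    unfolding l_def by (simp add: power2_eq_square field_simps)
  also have "exp (- (real n * l\<^sup>2 / 8)) \<le> exp (- (\<tau>\<^sup>2 * real n))"
  proof -
    have "3 * \<tau> \<le> l" "0 \<le> \<tau>"
      using assms unfolding l_def by auto
    then have "9 * \<tau>\<^sup>2 \<le> l\<^sup>2"
      using power_mono[of "3 * \<tau>" l 2] by (simp add: power_mult_distrib)
    then have "8 * \<tau>\<^sup>2 \<le> l\<^sup>2"
      using zero_le_power2[of \<tau>] by linarith
    then have "real n * (8 * \<tau>\<^sup>2) \<le> real n * l\<^sup>2"
      by (rule mult_left_mono) simp
    then show ?thesis
      by (simp add: algebra_simps)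
  qed
  finally show ?thesis .
qed

theorem corollary4p2:
  fixes A :: "'a::countable list \<Rightarrow> ('a \<Rightarrow> real) measure"
    and P :: "'a pmf" and n :: nat and \<epsilon> \<tau> :: real
  assumes "n > 0"
    and "is_algorithm n A"
    and "\<And>x. length x = n \<Longrightarrow> AE \<phi> in A x. \<forall>z. \<phi> z \<in> {0..1}"
    and "differentially_private \<epsilon> n A"
    and "\<tau> > 0"
    and "\<epsilon> \<le> sqrt (\<tau>\<^sup>2 - ln 2 / (2 * real n))"
  shows "measure_pmf.expectation (replicate_pmf n P)
           (\<lambda>S. measure (A S) {\<phi> \<in> space (A S). \<bar>pop_mean P \<phi> - emp_mean S \<phi>\<bar> > \<tau>})
         \<le> 3 * sqrt 2 * exp (- (\<tau>\<^sup>2 * real n))"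
proof -
  define e where "e = max \<epsilon> 0"
  have "sqrt (\<tau>\<^sup>2 - ln 2 / (2 * real n)) \<le> \<tau>"
    using \<open>\<tau> > 0\<close> real_sqrt_le_mono[of "\<tau>\<^sup>2 - ln 2 / (2 * real n)" "\<tau>\<^sup>2"] by simp
  then have "0 \<le> e" "e \<le> \<tau>"
    using assms(5,6) unfolding e_def by auto
  have "differentially_private e n A"
    using assms(4) by (rule differentially_private_mono) (simp add: e_def)
  then have "measure_pmf.expectation (replicate_pmf n P)
      (\<lambda>S. measure (A S) {\<phi> \<in> space (A S). \<tau> < \<bar>pop_mean P \<phi> - emp_mean S \<phi>\<bar>})
    \<le> 2 * exp (- ((4 * \<tau> - e) * real n * \<tau>)) * exp ((4 * \<tau> - e)\<^sup>2 / 8 + (4 * \<tau> - e) * e / 4) ^ n"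
    using assms(1-3) \<open>0 \<le> e\<close> \<open>e \<le> \<tau>\<close> by (intro differentially_private_deviation_le) auto
  also have "\<dots> \<le> 2 * exp (- (\<tau>\<^sup>2 * real n))"
    using chernoff_bound_at_optimal_parameter[OF \<open>0 \<le> e\<close> \<open>e \<le> \<tau>\<close>, of n] by simp
  also have "\<dots> \<le> 3 * sqrt 2 * exp (- (\<tau>\<^sup>2 * real n))"
  proof -
    have "(1 :: real) \<le> sqrt 2"
      by simp
    then have "(2 :: real) \<le> 3 * sqrt 2"
      by linarith
    then show ?thesis
      by (intro mult_right_mono) auto
  qed
  finally show ?thesis .
qed

end
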